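(* Let $f(x)=\frac1n\sum_{i=1}^nf_i(x)$ on $\mathbb{R}^d$ where each $f_i$ is convex (not necessarily differentiable) and lower bounded, and let $x^*$ be a minimizer of $f$. For any non-decreasing positive sequence $(c_k)_{k\ge0}$, consider the stochastic subgradient method with the DecSPS-NS stepsize (defined in the context). Then for every $K\ge1$, $$\mathbb{E}[f(\bar x^K)-f(x^* )]\le\frac{c_{K-1}D^2}{\gamma_\ell c_0K}+\frac1K\sum_{k=0}^{K-1}\frac{c_0\gamma_bG^2}{c_k},$$ where $\bar x^K=\frac1K\sum_{k=0}^{K-1}x^k$, $D^2:=\max_{k\in[K-1]}\|x^k-x^*\|^2$ and $G^2:=\max_{k\in[K-1]}\|g_{\mathcal S_k}(x^k)\|^2$.
   Context: Minibatches: fix a batch size $B$; at each iteration a subset $\mathcal S_k\subseteq[n]$, $|\mathcal S_k|=B$, is sampled uniformly at random, independently across iterations. For $\mathcal S\subseteq[n]$, $f_{\mathcal S}:=\frac1{|\mathcal S|}\sum_{i\in\mathcal S}f_i$, $f^*_{\mathcal S}:=\inf_xf_{\mathcal S}(x)$, $\ell^*_{\mathcal S}$ is a given real number with $\ell^*_{\mathcal S}\le f^*_{\mathcal S}$, and $g_{\mathcal S}(x)$ denotes a subgradient of $f_{\mathcal S}$ at $x$. Method: $x^{k+1}=x^k-\gamma_kg_{\mathcal S_k}(x^k)$. DecSPS-NS stepsize: $\gamma_k:=\frac1{c_k}\min\left\{\max\left\{c_0\gamma_\ell,\ \frac{f_{\mathcal S_k}(x^k)-\ell^*_{\mathcal S_k}}{\|g_{\mathcal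 S_k}(x^k)\|^2}\right\},\ c_{k-1}\gamma_{k-1}\right\}$ for $k\ge0$, with $c_{-1}=c_0$, $\gamma_{-1}=\gamma_b$, where $0<\gamma_\ell\le\gamma_b$ are fixed constants. $[K-1]$ denotes $\{0,\dots,K-1\}$. *)

theory Defs
  imports "HOL-Analysis.Analysis"
begin

definition is_subgradient :: "('a::real_inner \<Rightarrow> real) \<Rightarrow> 'a \<Rightarrow> 'a \<Rightarrow> bool" where
  "is_subgradient h x g \<longleftrightarrow> (\<forall>y. h y \<ge> h x + g \<bullet> (y - x))"

definition batch_f :: "(nat \<Rightarrow> 'a \<Rightarrow> real) \<Rightarrow> nat set \<Rightarrow> 'a \<Rightarrow> real" where
  "batch_f fs S x = (\<Sum>i\<in>S. fs i x) / real (card S)"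

definition full_f :: "nat \<Rightarrow> (nat \<Rightarrow> 'a \<Rightarrow> real) \<Rightarrow> 'a \<Rightarrow> real" where
  "full_f n fs x = (\<Sum>i<n. fs i x) / real n"

definition batches :: "nat \<Rightarrow> nat \<Rightarrow> nat set set" where
  "batches n B = {S. S \<subseteq> {..<n} \<and> card S = B}"

text \<open>State of the method after k steps: (x^k, gamma_{k-1}), with gamma_{-1} = gamma_b,
  c_{-1} = c_0.  omega k is the minibatch S_k, g S x the subgradient oracle for f_S,
  lstar S the lower bound ell*_S.\<close>
primrec decsps_state ::
  "(nat \<Rightarrow> 'a::real_inner \<Rightarrow> real) \<Rightarrow> (nat set \<Rightarrow> real) \<Rightarrow> (nat set \<Rightarrow> 'a \<Rightarrow> 'a)
   \<Rightarrow> (nat \<Rightarrow> real) \<Rightarrow> real \<Rightarrow> real \<Rightarrow> 'a \<Rightarrow> (nat \<Rightarrow> nat set) \<Rightarrow> nat \<Rightarrow> 'a \<times> real" where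
  "decsps_state fs lstar g c gl gb x0 \<omega> 0 = (x0, gb)"
| "decsps_state fs lstar g c gl gb x0 \<omega> (Suc k) =
     (let (x, gprev) = decsps_state fs lstar g c gl gb x0 \<omega> k;
          S = \<omega> k;
          cprev = (if k = 0 then c 0 else c (k - 1));
          gam = min (max (c 0 * gl) ((batch_f fs S x - lstar S) / (norm (g S x))\<^sup>2))
                    (cprev * gprev) / c k
      in (x - gam *\<^sub>R g S x, gam))"

definition decsps_iter ::
  "(nat \<Rightarrow> 'a::real_inner \<Rightarrow> real) \<Rightarrow> (nat set \<Rightarrow> real) \<Rightarrow> (nat set \<Rightarrow> 'a \<Rightarrow> 'a)
   \<Rightarrow> (nat \<Rightarrow> real) \<Rightarrow> real \<Rightarrow> real \<Rightarrow> 'a \<Rightarrow> (nat \<Rightarrow> nat set) \<Rightarrow> nat \<Rightarrow> 'a" where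
  "decsps_iter fs lstar g c gl gb x0 \<omega> k = fst (decsps_state fs lstar g c gl gb x0 \<omega> k)"

text \<open>Expectation over i.i.d. uniform minibatches S_0,...,S_{K-1}: the uniform average
  over all sequences of K admissible minibatches.\<close>
definition batch_expect :: "nat \<Rightarrow> nat \<Rightarrow> nat \<Rightarrow> ((nat \<Rightarrow> nat set) \<Rightarrow> real) \<Rightarrow> real" where
  "batch_expect n B K X =
     (let \<Omega> = PiE {..<K} (\<lambda>_. batches n B) in (\<Sum>\<omega>\<in>\<Omega>. X \<omega>) / real (card \<Omega>))"

end

theory Submission
  imports Defs
begin

(* Along every realisation of the minibatches, the clipping in the DecSPS-NS rule keeps
   c_0 \<gamma>_l <= c_k \<gamma>_k <= c_0 \<gamma>_b, and since c is non-decreasing the stepsizes \<gamma>_k are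
   positive and non-increasing.  The classical estimate for the subgradient method with
   non-increasing stepsizes then bounds the minibatch regret pathwise:
   2 sum_k (f_{S_k}(x^k) - f_{S_k}(xstar)) <= D^2 / \<gamma>_{K-1} + sum_k \<gamma>_k |g_k|^2.
   Since x^k depends only on S_0, ..., S_{k-1} and a uniform minibatch gives an unbiased
   estimate of f, the expected minibatch regret is the expected regret of f, and Jensen's
   inequality passes to the averaged iterate. *)

lemma subgradient_step_le:
  fixes x v y :: "'a::real_inner"
  assumes "is_subgradient h x v" and "0 < t"
  shows "2 * (h x - h y)
    \<le> ((norm (x - y))\<^sup>2 - (norm (x - t *\<^sub>R v - y))\<^sup>2) / t + t * (norm v)\<^sup>2"
proof -
  have "h x + v \<bullet> (y - x) \<le> h y"
    using assms(1) by (simp add: is_subgradient_def)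
  then have subgrad_ineq: "h x - h y \<le> v \<bullet> (x - y)"
    by (simp add: inner_diff_right)
  have expand: "(norm (x - t *\<^sub>R v - y))\<^sup>2
      = (norm (x - y))\<^sup>2 - 2 * t * (v \<bullet> (x - y)) + t\<^sup>2 * (norm v)\<^sup>2"
    unfolding power2_norm_eq_inner
    by (simp add: inner_diff_left inner_diff_right inner_commute algebra_simps power2_eq_square)
  from subgrad_ineq have "2 * (h x - h y) \<le> 2 * (v \<bullet> (x - y))"
    by simp
  also have "\<dots> = ((norm (x - y))\<^sup>2 - (norm (x - t *\<^sub>R v - y))\<^sup>2) / t + t * (norm v)\<^sup>2"
    unfolding expand using assms(2) by (simp add: field_simps power2_eq_square)
  finally show ?thesis .
qed

lemma sum_telescope_divide_le:
  fixes d t :: "nat \<Rightarrow> real"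
  assumes "\<And>k. 0 < t k" and "\<And>k. t (Suc k) \<le> t k"
    and "\<And>k. k < K \<Longrightarrow> d k \<le> M" and "1 \<le> K"
  shows "(\<Sum>k<K. (d k - d (Suc k)) / t k) \<le> (M - d K) / t (K - 1)"
  using assms(4,3)
proof (induction K rule: nat_induct_at_least)
  case base
  then show ?case using assms(1)[of 0] by (simp add: divide_right_mono)
next
  case (Suc K)
  have "(\<Sum>k<Suc K. (d k - d (Suc k)) / t k)
      \<le> (M - d K) / t (K - 1) + (d K - d (Suc K)) / t K"
    using Suc by simp
  also have "(M - d K) / t (K - 1) \<le> (M - d K) / t K"
    using Suc assms(1)[of K] assms(2)[of "K - 1"] by (intro divide_left_mono) auto
  finally show ?case by (simp add: diff_divide_distrib)
qed

lemma subgradient_method_regret_le: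
  fixes x v :: "nat \<Rightarrow> 'a::real_inner"
  assumes iter: "\<And>k. x (Suc k) = x k - t k *\<^sub>R v k"
    and subgrad: "\<And>k. k < K \<Longrightarrow> is_subgradient (h k) (x k) (v k)"
    and t_pos: "\<And>k. 0 < t k" and t_antimono: "\<And>k. t (Suc k) \<le> t k"
    and dist_le: "\<And>k. k < K \<Longrightarrow> (norm (x k - y))\<^sup>2 \<le> D2" and K: "1 \<le> K"
  shows "2 * (\<Sum>k<K. h k (x k) - h k y)
    \<le> D2 / t (K - 1) + (\<Sum>k<K. t k * (norm (v k))\<^sup>2)"
proof -
  define d where "d k = (norm (x k - y))\<^sup>2" for k
  have "2 * (\<Sum>k<K. h k (x k) - h k y)
      \<le> (\<Sum>k<K. (d k - d (Suc k)) / t k + t k * (norm (v k))\<^sup>2)"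
    unfolding sum_distrib_left d_def iter
    using subgradient_step_le[OF subgrad t_pos] by (intro sum_mono) auto
  also have "\<dots> \<le> (D2 - d K) / t (K - 1) + (\<Sum>k<K. t k * (norm (v k))\<^sup>2)"
    unfolding sum.distrib
    using sum_telescope_divide_le[where d = d and M = D2] t_pos t_antimono dist_le K
    by (simp add: d_def)
  also have "\<dots> \<le> D2 / t (K - 1) + (\<Sum>k<K. t k * (norm (v k))\<^sup>2)"
    using t_pos[of "K - 1"] by (simp add: d_def divide_right_mono)
  finally show ?thesis .
qed

lemma decsps_state_cong:
  "(\<And>j. j < k \<Longrightarrow> \<omega> j = \<omega>' j) \<Longrightarrow>
    decsps_state fs lstar g c gl gb x0 \<omega> k = decsps_state fs lstar g c gl gb x0 \<omega>' k"
  by (induction k) (auto simp: Let_def split_beta)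

lemma decsps_iter_cong:
  "(\<And>j. j < k \<Longrightarrow> \<omega> j = \<omega>' j) \<Longrightarrow>
    decsps_iter fs lstar g c gl gb x0 \<omega> k = decsps_iter fs lstar g c gl gb x0 \<omega>' k"
  unfolding decsps_iter_def by (simp cong: decsps_state_cong)

locale decsps =
  fixes fs :: "nat \<Rightarrow> 'a::real_inner \<Rightarrow> real" and lstar :: "nat set \<Rightarrow> real"
    and g :: "nat set \<Rightarrow> 'a \<Rightarrow> 'a" and c :: "nat \<Rightarrow> real" and gl gb :: real
    and x0 :: 'a and \<omega> :: "nat \<Rightarrow> nat set"
  assumes c_pos: "\<And>k. 0 < c k" and c_mono: "mono c"
    and gl_pos: "0 < gl" and gl_le_gb: "gl \<le> gb"
begin

abbreviation iter :: "nat \<Rightarrow> 'a" where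
  "iter \<equiv> decsps_iter fs lstar g c gl gb x0 \<omega>"

(* The state after k + 1 steps holds x^(k+1) together with \<gamma>_k. *)
definition stepsize :: "nat \<Rightarrow> real" where
  "stepsize k = snd (decsps_state fs lstar g c gl gb x0 \<omega> (Suc k))"

abbreviation polyak :: "nat \<Rightarrow> real" where
  "polyak k \<equiv> (batch_f fs (\<omega> k) (iter k) - lstar (\<omega> k)) / (norm (g (\<omega> k) (iter k)))\<^sup>2"

lemma iter_Suc: "iter (Suc k) = iter k - stepsize k *\<^sub>R g (\<omega> k) (iter k)"
  unfolding stepsize_def decsps_iter_def by (simp add: Let_def split_beta)

lemma stepsize_0: "c 0 * stepsize 0 = min (max (c 0 * gl) (polyak 0)) (c 0 * gb)"
  unfolding stepsize_def decsps_iter_def using c_pos[of 0] by (simp add: Let_def)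

lemma stepsize_Suc:
  "c (Suc k) * stepsize (Suc k) = min (max (c 0 * gl) (polyak (Suc k))) (c k * stepsize k)"
  unfolding stepsize_def decsps_iter_def decsps_state.simps(2)[where k = "Suc k"]
  using c_pos[of "Suc k"] by (simp add: Let_def split_beta del: decsps_state.simps)

lemma stepsize_lower: "c 0 * gl \<le> c k * stepsize k"
proof (induction k)
  case 0
  show ?case using stepsize_0 c_pos[of 0] gl_le_gb by simp
next
  case (Suc k)
  then show ?case using stepsize_Suc[of k] by simp
qed

lemma stepsize_upper: "c k * stepsize k \<le> c 0 * gb"
proof (induction k)
  case 0
  show ?case using stepsize_0 by simp
next
  case (Suc k)
  then show ?case using stepsize_Suc[of k] by simp
qed

lemma stepsize_pos: "0 < stepsize k"
  using stepsize_lower[of k] c_pos[of 0] c_pos[of k] gl_pos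
  by (metis mult_pos_pos order_less_le_trans zero_less_mult_pos)

lemma stepsize_antimono: "stepsize (Suc k) \<le> stepsize k"
proof -
  have "c (Suc k) * stepsize (Suc k) \<le> c k * stepsize k"
    using stepsize_Suc[of k] by simp
  also have "\<dots> \<le> c (Suc k) * stepsize k"
    using c_mono stepsize_pos[of k] by (simp add: mono_def mult_right_mono)
  finally show ?thesis using c_pos[of "Suc k"] by simp
qed

lemma regret_le:
  assumes subgrad: "\<And>k. k < K \<Longrightarrow> is_subgradient (batch_f fs (\<omega> k)) (iter k) (g (\<omega> k) (iter k))"
    and dist_le: "\<And>k. k < K \<Longrightarrow> (norm (iter k - y))\<^sup>2 \<le> D2"
    and subgrad_le: "\<And>k. k < K \<Longrightarrow> (norm (g (\<omega> k) (iter k)))\<^sup>2 \<le> G2"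
    and K: "1 \<le> K"
  shows "2 * (\<Sum>k<K. batch_f fs (\<omega> k) (iter k) - batch_f fs (\<omega> k) y)
    \<le> c (K - 1) * D2 / (gl * c 0) + (\<Sum>k<K. c 0 * gb * G2 / c k)"
proof -
  have "2 * (\<Sum>k<K. batch_f fs (\<omega> k) (iter k) - batch_f fs (\<omega> k) y)
      \<le> D2 / stepsize (K - 1) + (\<Sum>k<K. stepsize k * (norm (g (\<omega> k) (iter k)))\<^sup>2)"
    using subgradient_method_regret_le[where h = "\<lambda>k. batch_f fs (\<omega> k)"
        and v = "\<lambda>k. g (\<omega> k) (iter k)",
        OF iter_Suc subgrad stepsize_pos stepsize_antimono dist_le K] .
  also have "D2 / stepsize (K - 1) \<le> c (K - 1) * D2 / (gl * c 0)"
  proof -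
    have "0 \<le> D2"
      using dist_le[of 0] K by (auto intro: order_trans[OF zero_le_power2])
    then show ?thesis
      using mult_left_mono[OF stepsize_lower[of "K - 1"]] stepsize_pos[of "K - 1"]
        c_pos[of 0] gl_pos
      by (simp add: divide_simps algebra_simps)
  qed
  also have "stepsize k * (norm (g (\<omega> k) (iter k)))\<^sup>2 \<le> c 0 * gb * G2 / c k" if "k < K" for k
  proof -
    have "stepsize k \<le> c 0 * gb / c k"
      using stepsize_upper[of k] c_pos[of k] by (simp add: divide_simps mult.commute)
    then have "stepsize k * (norm (g (\<omega> k) (iter k)))\<^sup>2 \<le> c 0 * gb / c k * G2"
      using subgrad_le[OF that] stepsize_pos[of k] by (intro mult_mono) auto
    then show ?thesis by simp
  qed
  then have "(\<Sum>k<K. stepsize k * (norm (g (\<omega> k) (iter k)))\<^sup>2) \<le> (\<Sum>k<K. c 0 * gb * G2 / c k)"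
    by (intro sum_mono) simp
  finally show ?thesis by simp
qed

lemma mean_regret_le:
  assumes subgrad: "\<And>k. k < K \<Longrightarrow> is_subgradient (batch_f fs (\<omega> k)) (iter k) (g (\<omega> k) (iter k))"
    and dist_le: "\<And>k. k < K \<Longrightarrow> (norm (iter k - y))\<^sup>2 \<le> D2"
    and subgrad_le: "\<And>k. k < K \<Longrightarrow> (norm (g (\<omega> k) (iter k)))\<^sup>2 \<le> G2"
    and K: "1 \<le> K"
  shows "(1 / real K) * (\<Sum>k<K. batch_f fs (\<omega> k) (iter k) - batch_f fs (\<omega> k) y)
    \<le> c (K - 1) * D2 / (gl * c 0 * real K) + (1 / real K) * (\<Sum>k<K. c 0 * gb * G2 / c k)"
proof -
  define Q where "Q = c (K - 1) * D2 / (gl * c 0) + (\<Sum>k<K. c 0 * gb * G2 / c k)"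
  have "0 \<le> D2" and "0 \<le> G2"
    using dist_le[of 0] subgrad_le[of 0] K by (auto intro: order_trans[OF zero_le_power2])
  then have "0 \<le> Q"
    unfolding Q_def using c_pos gl_pos gl_le_gb
    by (intro add_nonneg_nonneg sum_nonneg divide_nonneg_pos mult_nonneg_nonneg mult_pos_pos)
      (auto intro: less_imp_le)
  moreover have "2 * (\<Sum>k<K. batch_f fs (\<omega> k) (iter k) - batch_f fs (\<omega> k) y) \<le> Q"
    unfolding Q_def using subgrad dist_le subgrad_le K by (rule regret_le)
  ultimately have "(\<Sum>k<K. batch_f fs (\<omega> k) (iter k) - batch_f fs (\<omega> k) y) \<le> Q"
    by linarith
  then have "(1 / real K) * (\<Sum>k<K. batch_f fs (\<omega> k) (iter k) - batch_f fs (\<omega> k) y)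
      \<le> (1 / real K) * Q"
    by (intro mult_left_mono) auto
  then show ?thesis
    unfolding Q_def by (simp add: distrib_left ac_simps)
qed

end

lemma finite_batches: "finite (batches n B)"
  unfolding batches_def by (rule finite_subset[of _ "Pow {..<n}"]) auto

lemma batches_nonempty: "B \<le> n \<Longrightarrow> batches n B \<noteq> {}"
  unfolding batches_def by (auto intro!: exI[of _ "{..<B}"])

lemma card_batches: "card (batches n B) = n choose B"
  unfolding batches_def using n_subsets[of "{..<n}" B] by simp

lemma card_batches_containing:
  assumes "i < n" and "1 \<le> B"
  shows "card {S \<in> batches n B. i \<in> S} = (n - 1) choose (B - 1)"
proof -
  let ?T = "{T. T \<subseteq> {..<n} - {i} \<and> card T = B - 1}"
  have "bij_betw (insert i) ?T {S \<in> batches n B. i \<in> S}"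
  proof (rule bij_betw_imageI)
    show "inj_on (insert i) ?T"
      by (rule inj_onI) blast
    show "insert i ` ?T = {S \<in> batches n B. i \<in> S}"
    proof (intro set_eqI iffI)
      fix S assume "S \<in> insert i ` ?T"
      then obtain T where "S = insert i T" "T \<subseteq> {..<n} - {i}" "card T = B - 1"
        by auto
      moreover have "finite T" and "i \<notin> T"
        using \<open>T \<subseteq> {..<n} - {i}\<close> finite_subset by auto
      ultimately show "S \<in> {S \<in> batches n B. i \<in> S}"
        using assms by (auto simp: batches_def)
    next
      fix S assume "S \<in> {S \<in> batches n B. i \<in> S}"
      then have S: "S \<subseteq> {..<n}" "card S = B" "i \<in> S"
        by (auto simp: batches_def)
      then have "S - {i} \<in> ?T" and "S = insert i (S - {i})"
        using finite_subset[OF S(1)] by auto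
      then show "S \<in> insert i ` ?T" by blast
    qed
  qed
  then have "card {S \<in> batches n B. i \<in> S} = card ?T"
    by (simp add: bij_betw_same_card)
  also have "\<dots> = (n - 1) choose (B - 1)"
    using n_subsets[of "{..<n} - {i}" "B - 1"] assms(1) by simp
  finally show ?thesis .
qed

lemma sum_batch_f_batches:
  assumes "1 \<le> B" and "B \<le> n"
  shows "(\<Sum>S\<in>batches n B. batch_f fs S x) = real (card (batches n B)) * full_f n fs x"
proof -
  have "(\<Sum>S\<in>batches n B. batch_f fs S x)
      = (\<Sum>S\<in>batches n B. \<Sum>i\<in>{i \<in> {..<n}. i \<in> S}. fs i x) / B"
    unfolding sum_divide_distrib batch_f_def batches_def
    by (intro sum.cong refl arg_cong2[where f = "(/)"] arg_cong2[where f = sum]) auto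
  also have "(\<Sum>S\<in>batches n B. \<Sum>i\<in>{i \<in> {..<n}. i \<in> S}. fs i x)
      = (\<Sum>i<n. \<Sum>S\<in>{S \<in> batches n B. i \<in> S}. fs i x)"
    by (rule sum.swap_restrict) (auto simp: finite_batches)
  also have "\<dots> = ((n - 1) choose (B - 1)) * (\<Sum>i<n. fs i x)"
    using card_batches_containing[OF _ assms(1)] by (simp add: sum_distrib_left)
  finally have "(\<Sum>S\<in>batches n B. batch_f fs S x)
      = real ((n - 1) choose (B - 1)) / B * (\<Sum>i<n. fs i x)"
    by simp
  also have "real ((n - 1) choose (B - 1)) / B = real (n choose B) / n"
  proof -
    have "n * ((n - 1) choose (B - 1)) = (n choose B) * B"
      using Suc_times_binomial_eq[of "n - 1" "B - 1"] assms by simp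
    then have "real n * real ((n - 1) choose (B - 1)) = real (n choose B) * real B"
      by (metis of_nat_mult)
    then show ?thesis using assms by (simp add: field_simps)
  qed
  finally show ?thesis
    unfolding card_batches full_f_def by simp
qed

lemma sum_PiE_resample_coordinate:
  fixes \<phi> :: "'s \<Rightarrow> 'x \<Rightarrow> real" and X :: "('i \<Rightarrow> 's) \<Rightarrow> 'x"
  assumes "finite I" and "k \<in> I" and "finite A"
    and indep: "\<And>\<omega> \<omega>'. (\<And>j. j \<noteq> k \<Longrightarrow> \<omega> j = \<omega>' j) \<Longrightarrow> X \<omega> = X \<omega>'"
  shows "(\<Sum>\<omega>\<in>PiE I (\<lambda>_. A). \<Sum>S\<in>A. \<phi> S (X \<omega>))
    = real (card A) * (\<Sum>\<omega>\<in>PiE I (\<lambda>_. A). \<phi> (\<omega> k) (X \<omega>))"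
proof -
  define P where "P = PiE (I - {k}) (\<lambda>_. A)"
  have PiE_eq: "PiE I (\<lambda>_. A) = (\<lambda>(y, h). h(k := y)) ` (A \<times> P)"
    unfolding P_def using assms(2) PiE_insert_eq[of k "I - {k}"] by (simp add: insert_absorb)
  have inj: "inj_on (\<lambda>(y, h). h(k := y)) (A \<times> P)"
    unfolding P_def using inj_combinator[of k "I - {k}" "\<lambda>_. A"] by simp
  have reindex: "(\<Sum>\<omega>\<in>PiE I (\<lambda>_. A). F \<omega>) = (\<Sum>(y, h)\<in>A \<times> P. F (h(k := y)))"
    for F :: "('i \<Rightarrow> 's) \<Rightarrow> real"
    unfolding PiE_eq by (subst sum.reindex[OF inj]) (simp add: case_prod_beta comp_def)
  have X_upd: "X (h(k := y)) = X h" for h y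
    by (rule indep) simp
  have "(\<Sum>\<omega>\<in>PiE I (\<lambda>_. A). \<Sum>S\<in>A. \<phi> S (X \<omega>)) = (\<Sum>(y, h)\<in>A \<times> P. \<Sum>S\<in>A. \<phi> S (X h))"
    unfolding reindex X_upd ..
  also have "\<dots> = (\<Sum>y\<in>A. \<Sum>h\<in>P. \<Sum>S\<in>A. \<phi> S (X h))"
    by (rule sum.cartesian_product[symmetric])
  also have "\<dots> = real (card A) * (\<Sum>S\<in>A. \<Sum>h\<in>P. \<phi> S (X h))"
    by (simp add: sum.swap[of _ P])
  also have "(\<Sum>S\<in>A. \<Sum>h\<in>P. \<phi> S (X h)) = (\<Sum>(S, h)\<in>A \<times> P. \<phi> S (X h))"
    by (rule sum.cartesian_product)
  also have "\<dots> = (\<Sum>\<omega>\<in>PiE I (\<lambda>_. A). \<phi> (\<omega> k) (X \<omega>))"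
    unfolding reindex X_upd by simp
  finally show ?thesis .
qed

lemma batch_expect_mono:
  assumes "\<And>\<omega>. \<omega> \<in> PiE {..<K} (\<lambda>_. batches n B) \<Longrightarrow> X \<omega> \<le> Y \<omega>"
  shows "batch_expect n B K X \<le> batch_expect n B K Y"
  unfolding batch_expect_def Let_def using assms by (intro divide_right_mono sum_mono) auto

lemma batch_expect_cmult: "batch_expect n B K (\<lambda>\<omega>. a * X \<omega>) = a * batch_expect n B K X"
  unfolding batch_expect_def Let_def by (simp add: sum_distrib_left)

lemma batch_expect_diff:
  "batch_expect n B K (\<lambda>\<omega>. X \<omega> - Y \<omega>) = batch_expect n B K X - batch_expect n B K Y"
  unfolding batch_expect_def Let_def by (simp add: sum_subtractf diff_divide_distrib)

lemma batch_expect_sum: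
  "batch_expect n B K (\<lambda>\<omega>. \<Sum>k\<in>I. X k \<omega>) = (\<Sum>k\<in>I. batch_expect n B K (X k))"
  unfolding batch_expect_def Let_def by (simp add: sum.swap[of _ I] sum_divide_distrib)

lemma batch_expect_full_f:
  assumes "1 \<le> B" and "B \<le> n" and "k < K"
    and indep: "\<And>\<omega> \<omega>'. (\<And>j. j \<noteq> k \<Longrightarrow> \<omega> j = \<omega>' j) \<Longrightarrow> X \<omega> = X \<omega>'"
  shows "batch_expect n B K (\<lambda>\<omega>. full_f n fs (X \<omega>))
    = batch_expect n B K (\<lambda>\<omega>. batch_f fs (\<omega> k) (X \<omega>))"
proof -
  let ?A = "batches n B" and ?\<Omega> = "PiE {..<K} (\<lambda>_. batches n B)"
  have "real (card ?A) * (\<Sum>\<omega>\<in>?\<Omega>. full_f n fs (X \<omega>))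
      = (\<Sum>\<omega>\<in>?\<Omega>. \<Sum>S\<in>?A. batch_f fs S (X \<omega>))"
    by (simp add: sum_distrib_left sum_batch_f_batches[OF assms(1,2)])
  also have "\<dots> = real (card ?A) * (\<Sum>\<omega>\<in>?\<Omega>. batch_f fs (\<omega> k) (X \<omega>))"
    using assms(3) by (intro sum_PiE_resample_coordinate[OF _ _ finite_batches indep]) auto
  finally show ?thesis
    using finite_batches batches_nonempty[OF assms(2)] by (simp add: batch_expect_def)
qed

lemma batch_expect_regret_full_f:
  assumes "1 \<le> B" and "B \<le> n"
    and adapted: "\<And>k \<omega> \<omega>'. (\<And>j. j < k \<Longrightarrow> \<omega> j = \<omega>' j) \<Longrightarrow> X k \<omega> = X k \<omega>'"
  shows "batch_expect n B K (\<lambda>\<omega>. \<Sum>k<K. full_f n fs (X k \<omega>) - full_f n fs y)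
    = batch_expect n B K (\<lambda>\<omega>. \<Sum>k<K. batch_f fs (\<omega> k) (X k \<omega>) - batch_f fs (\<omega> k) y)"
proof -
  have indep: "X k \<omega> = X k \<omega>'" if "\<And>j. j \<noteq> k \<Longrightarrow> \<omega> j = \<omega>' j" for k \<omega> \<omega>'
    using that by (intro adapted) simp
  have "batch_expect n B K (\<lambda>\<omega>. full_f n fs (X k \<omega>))
      = batch_expect n B K (\<lambda>\<omega>. batch_f fs (\<omega> k) (X k \<omega>))" if "k < K" for k
    using batch_expect_full_f[OF assms(1,2) that indep] .
  moreover have "batch_expect n B K (\<lambda>\<omega>. full_f n fs y)
      = batch_expect n B K (\<lambda>\<omega>. batch_f fs (\<omega> k) y)" if "k < K" for k
    using batch_expect_full_f[OF assms(1,2) that, where X = "\<lambda>_. y"] by simp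
  ultimately show ?thesis
    unfolding batch_expect_sum batch_expect_diff by simp
qed

lemma convex_on_sum_fun:
  assumes "finite I" and "convex S" and "\<And>i. i \<in> I \<Longrightarrow> convex_on S (f i)"
  shows "convex_on S (\<lambda>x. \<Sum>i\<in>I. f i x)"
  using assms(1,3) by (induction I rule: finite_induct) (auto simp: convex_on_const assms(2))

lemma convex_full_f:
  "\<forall>i<n. convex_on UNIV (fs i) \<Longrightarrow> convex_on UNIV (full_f n fs)"
  unfolding full_f_def[abs_def] by (intro convex_on_cdiv convex_on_sum_fun) auto

lemma convex_on_mean_le:
  fixes x :: "'i \<Rightarrow> 'a::real_vector"
  assumes "convex_on C F" and "finite I" and "I \<noteq> {}" and "\<And>i. i \<in> I \<Longrightarrow> x i \<in> C"
  shows "F ((1 / real (card I)) *\<^sub>R (\<Sum>i\<in>I. x i)) \<le> (1 / real (card I)) * (\<Sum>i\<in>I. F (x i))"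
  using convex_on_sum[OF assms(2,3,1), of "\<lambda>_. 1 / real (card I)" x] assms
  by (simp add: scaleR_sum_right sum_distrib_left)

lemma batch_expect_mean_gap_le_regret:
  fixes X :: "nat \<Rightarrow> (nat \<Rightarrow> nat set) \<Rightarrow> 'a::real_vector"
  assumes B: "1 \<le> B" "B \<le> n" and K: "1 \<le> K"
    and convex: "\<forall>i<n. convex_on UNIV (fs i)"
    and adapted: "\<And>k \<omega> \<omega>'. (\<And>j. j < k \<Longrightarrow> \<omega> j = \<omega>' j) \<Longrightarrow> X k \<omega> = X k \<omega>'"
  shows "batch_expect n B K (\<lambda>\<omega>. full_f n fs ((1 / real K) *\<^sub>R (\<Sum>k<K. X k \<omega>)) - full_f n fs y)
    \<le> batch_expect n B K
        (\<lambda>\<omega>. (1 / real K) * (\<Sum>k<K. batch_f fs (\<omega> k) (X k \<omega>) - batch_f fs (\<omega> k) y))"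
proof -
  have "full_f n fs ((1 / real K) *\<^sub>R (\<Sum>k<K. X k \<omega>))
      \<le> (1 / real K) * (\<Sum>k<K. full_f n fs (X k \<omega>))" for \<omega>
    using convex_on_mean_le[OF convex_full_f[OF convex], where I = "{..<K}" and x = "\<lambda>k. X k \<omega>"]
      K by (auto simp: lessThan_empty_iff)
  then have "batch_expect n B K
        (\<lambda>\<omega>. full_f n fs ((1 / real K) *\<^sub>R (\<Sum>k<K. X k \<omega>)) - full_f n fs y)
      \<le> batch_expect n B K (\<lambda>\<omega>. (1 / real K) * (\<Sum>k<K. full_f n fs (X k \<omega>) - full_f n fs y))"
    using K by (intro batch_expect_mono) (simp add: sum_subtractf right_diff_distrib)
  also have "\<dots> = batch_expect n B K
      (\<lambda>\<omega>. (1 / real K) * (\<Sum>k<K. batch_f fs (\<omega> k) (X k \<omega>) - batch_f fs (\<omega> k) y))"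
    unfolding batch_expect_cmult using batch_expect_regret_full_f[OF B adapted] by simp
  finally show ?thesis .
qed

theorem theorem5:
  fixes n B K :: nat
    and fs :: "nat \<Rightarrow> real^'d \<Rightarrow> real"
    and lstar :: "nat set \<Rightarrow> real"
    and g :: "nat set \<Rightarrow> real^'d \<Rightarrow> real^'d"
    and c :: "nat \<Rightarrow> real"
    and gl gb :: real
    and x0 xstar :: "real^'d"
  assumes n_pos: "n \<ge> 1"
    and B: "1 \<le> B" "B \<le> n"
    and convex: "\<forall>i<n. convex_on UNIV (fs i)"
    and lower_bdd: "\<forall>i<n. \<exists>m. \<forall>x. m \<le> fs i x"
    and minimizer: "\<forall>x. full_f n fs xstar \<le> full_f n fs x"
    and lstar_le: "\<forall>S\<in>batches n B. \<forall>x. lstar S \<le> batch_f fs S x"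
    and subgrad: "\<forall>S\<in>batches n B. \<forall>x. is_subgradient (batch_f fs S) x (g S x)"
    and c_mono: "mono c"
    and c_pos: "\<forall>k. c k > 0"
    and gammas: "0 < gl" "gl \<le> gb"
    and K: "K \<ge> 1"
  shows "batch_expect n B K (\<lambda>\<omega>.
            full_f n fs ((1 / real K) *\<^sub>R (\<Sum>k<K. decsps_iter fs lstar g c gl gb x0 \<omega> k))
            - full_f n fs xstar)
         \<le> batch_expect n B K (\<lambda>\<omega>.
            let D2 = Max ((\<lambda>k. (norm (decsps_iter fs lstar g c gl gb x0 \<omega> k - xstar))\<^sup>2) ` {..<K});
                G2 = Max ((\<lambda>k. (norm (g (\<omega> k) (decsps_iter fs lstar g c gl gb x0 \<omega> k)))\<^sup>2) ` {..<K})
            in c (K - 1) * D2 / (gl * c 0 * real K)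
               + (1 / real K) * (\<Sum>k<K. c 0 * gb * G2 / c k))"
proof (rule order_trans[OF batch_expect_mean_gap_le_regret[OF B K convex]],
    fact decsps_iter_cong, rule batch_expect_mono, goal_cases)
  case (1 \<omega>)
  interpret decsps fs lstar g c gl gb x0 \<omega>
    using c_pos c_mono gammas by unfold_locales auto
  show ?case
    unfolding Let_def
  proof (rule mean_regret_le)
    show "is_subgradient (batch_f fs (\<omega> k)) (iter k) (g (\<omega> k) (iter k))" if "k < K" for k
      using subgrad 1 that by auto
    show "(norm (iter k - xstar))\<^sup>2 \<le> Max ((\<lambda>k. (norm (iter k - xstar))\<^sup>2) ` {..<K})"
      if "k < K" for k
      using that by (intro Max_ge) auto
    show "(norm (g (\<omega> k) (iter k)))\<^sup>2 \<le> Max ((\<lambda>k. (norm (g (\<omega> k) (iter k)))\<^sup>2) ` {..<K})"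
      if "k < K" for k
      using that by (intro Max_ge) auto
  qed (rule K)
qed

end
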